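(* Let $\mathcal{X}\subset\mathbb{R}^n$ be a convex connected domain containing $0$, let $K:\mathcal{X}\to\mathbb{R}$ be smooth with $\nabla^2K(x)>0$ for all $x$, let $\mathcal{U}=\mathbb{R}^m$, and let $V:\mathcal{X}\times\mathcal{U}\to\mathbb{R}$ be smooth with $$x^\top\frac{\partial V}{\partial x}(x,u)-u^\top\frac{\partial V}{\partial u}(x,u)\ge 0\quad\text{for all }x,u.$$ Consider the (nonlinear relaxation) system $$\nabla^2K(x)\,\dot x=-\frac{\partial V}{\partial x}(x,u),\qquad y=-\frac{\partial V}{\partial u}(x,u).$$ Then the system is passive with storage function $S(x):=K^*(\nabla K(x))$; that is, $S$ is bounded from below on $\mathcal{X}$ and $\nabla S(x)\dot x\le u^\top y$ for all $x\in\mathcal{X}$, $u\in\mathcal{U}$, where $\dot x=-(\nabla^2K(x))^{-1}\frac{\partial V}{\partial x}(x,u)$ and $y=-\frac{\partial V}{\partial u}(x,u)$.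
   Context: $K^*$ denotes the Legendre transform of $K$: with $\mathcal{Z}$ the image of the injective map $x\mapsto\nabla K(x)$, $K^*(z)=z^\top x-K(x)$ where $x$ solves $z=\nabla K(x)$ (equivalently $K^*(z)=\sup_x z^\top x-K(x)$ since $K$ is strictly convex). $\nabla$ denotes the gradient and $\nabla^2$ the Hessian. *)

theory Defs
  imports "HOL-Analysis.Analysis"
begin

fun Ck_on :: "nat \<Rightarrow> ('a::euclidean_space \<Rightarrow> real) \<Rightarrow> 'a set \<Rightarrow> bool" where
  "Ck_on 0 f S = continuous_on S f"
| "Ck_on (Suc k) f S =
     (continuous_on S f \<and> (\<forall>x\<in>S. f differentiable (at x)) \<and>
      (\<forall>b\<in>Basis. Ck_on k (\<lambda>x. frechet_derivative f (at x) b) S))"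

definition smooth_on :: "('a::euclidean_space \<Rightarrow> real) \<Rightarrow> 'a set \<Rightarrow> bool" where
  "smooth_on f S \<longleftrightarrow> (\<forall>k. Ck_on k f S)"

definition grad :: "(real^'n \<Rightarrow> real) \<Rightarrow> real^'n \<Rightarrow> real^'n" where
  "grad f x = (\<chi> i. frechet_derivative f (at x) (axis i 1))"

definition hess :: "(real^'n \<Rightarrow> real) \<Rightarrow> real^'n \<Rightarrow> real^'n^'n" where
  "hess f x = (\<chi> i j. frechet_derivative (\<lambda>y. grad f y $ i) (at x) (axis j 1))"

definition pos_def :: "real^'n^'n \<Rightarrow> bool" where
  "pos_def A \<longleftrightarrow> (\<forall>v. v \<noteq> 0 \<longrightarrow> v \<bullet> (A *v v) > 0)"

definition legendre :: "(real^'n \<Rightarrow> real) \<Rightarrow> (real^'n) set \<Rightarrow> real^'n \<Rightarrow> real" where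
  "legendre K X z = (let x = (THE x. x \<in> X \<and> grad K x = z) in z \<bullet> x - K x)"

end

theory Submission
  imports Defs
begin

text \<open>A positive definite Hessian on the convex set \<open>X\<close> makes \<open>\<nabla>K\<close> strictly monotone, hence
  injective, so the storage function is \<open>S(x) = \<nabla>K(x)\<cdot>x - K(x)\<close>. The first-order convexity
  inequality \<open>K(0) \<ge> K(x) - \<nabla>K(x)\<cdot>x\<close> bounds it below by \<open>-K(0)\<close>. Differentiating gives
  \<open>\<nabla>S(x) = \<nabla>\<^sup>2K(x) x\<close>, so along the dynamics \<open>\<nabla>S(x) \<dot>x = -x\<cdot>\<partial>V/\<partial>x\<close>, and the hypothesis
  on \<open>V\<close> is exactly \<open>-x\<cdot>\<partial>V/\<partial>x \<le> -u\<cdot>\<partial>V/\<partial>u = u\<cdot>y\<close>.\<close>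

lemma grad_inner_eq:
  fixes f :: "real^'n \<Rightarrow> real"
  assumes "(f has_derivative D) (at x)"
  shows "grad f x \<bullet> w = D w"
proof -
  have lin: "linear D" using assms has_derivative_linear by blast
  have "D w = D (\<Sum>i\<in>UNIV. w$i *\<^sub>R axis i 1)"
    using basis_expansion[of w] by (simp add: scalar_mult_eq_scaleR)
  also have "\<dots> = (\<Sum>i\<in>UNIV. w$i * D (axis i 1))"
    using lin by (simp add: linear_sum linear_scale)
  finally show ?thesis
    using frechet_derivative_at[OF assms]
    by (simp add: grad_def inner_vec_def mult.commute)
qed

lemma has_derivative_grad:
  fixes f :: "real^'n \<Rightarrow> real"
  assumes "f differentiable (at x)"
  shows "(f has_derivative (\<lambda>w. grad f x \<bullet> w)) (at x)"
  using assms frechet_derivative_works grad_inner_eq by fastforce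

lemma has_derivative_grad_component:
  fixes f :: "real^'n \<Rightarrow> real"
  assumes "(\<lambda>z. grad f z $ i) differentiable (at x)"
  shows "((\<lambda>z. grad f z $ i) has_derivative (\<lambda>w. (hess f x *v w) $ i)) (at x)"
proof -
  have "(hess f x *v w) $ i = grad (\<lambda>z. grad f z $ i) x \<bullet> w" for w
    by (simp add: matrix_vector_mult_def hess_def grad_def inner_vec_def)
  then show ?thesis using has_derivative_grad[OF assms] by simp
qed

lemma has_derivative_grad_inner:
  fixes f :: "real^'n \<Rightarrow> real"
  assumes "\<And>i. (\<lambda>z. grad f z $ i) differentiable (at x)"
    and "(g has_derivative g') (at x)"
  shows "((\<lambda>z. grad f z \<bullet> g z) has_derivative (\<lambda>w. (hess f x *v w) \<bullet> g x + grad f x \<bullet> g' w)) (at x)"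
proof -
  have "((\<lambda>z. g z $ i) has_derivative (\<lambda>w. g' w $ i)) (at x)" for i
    using bounded_linear_vec_nth assms(2) by (rule bounded_linear.has_derivative)
  then have "((\<lambda>z. \<Sum>i\<in>UNIV. grad f z $ i * g z $ i) has_derivative
      (\<lambda>w. \<Sum>i\<in>UNIV. grad f x $ i * g' w $ i + (hess f x *v w) $ i * g x $ i)) (at x)"
    by (intro has_derivative_sum has_derivative_mult has_derivative_grad_component assms(1))
  then show ?thesis by (simp add: inner_vec_def sum.distrib add.commute)
qed

lemma has_real_derivative_along_line:
  assumes "(f has_derivative D) (at (a + t *\<^sub>R d))"
  shows "((\<lambda>t. f (a + t *\<^sub>R d)) has_real_derivative D d) (at t)"
proof -
  have "((\<lambda>t. a + t *\<^sub>R d) has_derivative (\<lambda>s. s *\<^sub>R d)) (at t)"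
    by (auto intro!: derivative_eq_intros)
  from diff_chain_at[OF this assms]
  have "((\<lambda>t. f (a + t *\<^sub>R d)) has_derivative (\<lambda>s. s * D d)) (at t)"
    using has_derivative_linear[OF assms] by (simp add: o_def linear_scale)
  moreover have "(\<lambda>s. s * D d) = (*) (D d)" by (auto simp: fun_eq_iff)
  ultimately show ?thesis by (simp add: has_field_derivative_def)
qed

lemma Ck_on_Suc_Suc_differentiable:
  fixes f :: "real^'n \<Rightarrow> real"
  assumes "Ck_on (Suc (Suc k)) f S" and "x \<in> S"
  shows "f differentiable (at x)" and "(\<lambda>z. grad f z $ i) differentiable (at x)"
proof -
  show "f differentiable (at x)" using assms by simp
  have "axis i 1 \<in> (Basis :: (real^'n) set)" by simp
  then have "Ck_on (Suc k) (\<lambda>z. frechet_derivative f (at z) (axis i 1)) S"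
    using assms(1) by simp
  then show "(\<lambda>z. grad f z $ i) differentiable (at x)"
    using assms(2) by (simp add: grad_def)
qed

lemma grad_strictly_monotone:
  fixes f :: "real^'n \<Rightarrow> real"
  assumes "convex S" and "a \<in> S" and "b \<in> S" and "a \<noteq> b"
    and grad_diff: "\<And>x i. x \<in> S \<Longrightarrow> (\<lambda>z. grad f z $ i) differentiable (at x)"
    and pd: "\<And>x. x \<in> S \<Longrightarrow> pos_def (hess f x)"
  shows "0 < (grad f b - grad f a) \<bullet> (b - a)"
proof -
  define d where "d = b - a"
  have seg: "a + t *\<^sub>R d \<in> S" if "0 \<le> t" "t \<le> 1" for t
    using convexD_alt[OF assms(1-3) that] by (simp add: d_def algebra_simps)
  have deriv: "((\<lambda>t. grad f (a + t *\<^sub>R d) \<bullet> d) has_real_derivative (hess f (a + t *\<^sub>R d) *v d) \<bullet> d) (at t)"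
    if "0 \<le> t" "t \<le> 1" for t
    using has_real_derivative_along_line[OF has_derivative_grad_inner[OF grad_diff has_derivative_const]]
      seg[OF that] by simp
  from MVT2[OF zero_less_one deriv] obtain z where z: "0 < z" "z < 1"
    and mvt: "grad f (a + 1 *\<^sub>R d) \<bullet> d - grad f (a + 0 *\<^sub>R d) \<bullet> d = (1 - 0) * ((hess f (a + z *\<^sub>R d) *v d) \<bullet> d)"
    by blast
  have end_b: "a + d = b" by (simp add: d_def)
  have "0 < (hess f (a + z *\<^sub>R d) *v d) \<bullet> d"
    using pd[OF seg] z assms(4) by (simp add: pos_def_def d_def inner_commute)
  then show ?thesis using mvt by (simp add: end_b inner_diff_left flip: d_def)
qed

lemma inj_on_grad:
  fixes f :: "real^'n \<Rightarrow> real"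
  assumes "convex S"
    and "\<And>x i. x \<in> S \<Longrightarrow> (\<lambda>z. grad f z $ i) differentiable (at x)"
    and "\<And>x. x \<in> S \<Longrightarrow> pos_def (hess f x)"
  shows "inj_on (grad f) S"
proof (rule inj_onI, rule ccontr)
  fix a b assume "a \<in> S" "b \<in> S" "grad f a = grad f b" "a \<noteq> b"
  then show False using grad_strictly_monotone[OF assms(1) _ _ _ assms(2,3), of a b] by simp
qed

lemma grad_tangent_below:
  fixes f :: "real^'n \<Rightarrow> real"
  assumes "convex S" and "x \<in> S" and "y \<in> S"
    and diff: "\<And>x. x \<in> S \<Longrightarrow> f differentiable (at x)"
    and grad_diff: "\<And>x i. x \<in> S \<Longrightarrow> (\<lambda>z. grad f z $ i) differentiable (at x)"
    and pd: "\<And>x. x \<in> S \<Longrightarrow> pos_def (hess f x)"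
  shows "f x + grad f x \<bullet> (y - x) \<le> f y"
proof (cases "x = y")
  case False
  define d where "d = y - x"
  have seg: "x + t *\<^sub>R d \<in> S" if "0 \<le> t" "t \<le> 1" for t
    using convexD_alt[OF assms(1-3) that] by (simp add: d_def algebra_simps)
  have deriv: "((\<lambda>t. f (x + t *\<^sub>R d)) has_real_derivative grad f (x + t *\<^sub>R d) \<bullet> d) (at t)"
    if "0 \<le> t" "t \<le> 1" for t
    using has_real_derivative_along_line[OF has_derivative_grad[OF diff[OF seg[OF that]]]] .
  from MVT2[OF zero_less_one deriv] obtain z where z: "0 < z" "z < 1"
    and mvt: "f (x + 1 *\<^sub>R d) - f (x + 0 *\<^sub>R d) = (1 - 0) * (grad f (x + z *\<^sub>R d) \<bullet> d)"
    by blast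
  have "x + z *\<^sub>R d \<in> S" "x \<noteq> x + z *\<^sub>R d" using seg z False by (simp_all add: d_def)
  from grad_strictly_monotone[OF assms(1,2) this grad_diff pd] z
  have "0 < z * ((grad f (x + z *\<^sub>R d) - grad f x) \<bullet> d)"
    by (simp add: inner_commute)
  then have "grad f x \<bullet> d < grad f (x + z *\<^sub>R d) \<bullet> d"
    using z by (simp add: zero_less_mult_iff inner_diff_left)
  then show ?thesis using mvt by (simp add: d_def)
qed simp

lemma legendre_grad:
  assumes "inj_on (grad K) X" and "x \<in> X"
  shows "legendre K X (grad K x) = grad K x \<bullet> x - K x"
proof -
  have "(THE y. y \<in> X \<and> grad K y = grad K x) = x"
    using assms by (auto dest: inj_onD)
  then show ?thesis by (simp add: legendre_def)
qed

lemma has_derivative_legendre_grad: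
  fixes K :: "real^'n \<Rightarrow> real"
  assumes "open X" and "inj_on (grad K) X" and "x \<in> X"
    and "K differentiable (at x)"
    and "\<And>i. (\<lambda>z. grad K z $ i) differentiable (at x)"
  shows "((\<lambda>y. legendre K X (grad K y)) has_derivative (\<lambda>w. x \<bullet> (hess K x *v w))) (at x)"
proof -
  have "((\<lambda>y. grad K y \<bullet> y - K y) has_derivative
      (\<lambda>w. ((hess K x *v w) \<bullet> x + grad K x \<bullet> w) - grad K x \<bullet> w)) (at x)"
    by (intro has_derivative_diff has_derivative_grad_inner has_derivative_ident
        has_derivative_grad assms(4,5))
  then have "((\<lambda>y. grad K y \<bullet> y - K y) has_derivative (\<lambda>w. x \<bullet> (hess K x *v w))) (at x)"
    by (simp add: inner_commute)
  then show ?thesis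
    by (rule has_derivative_transform_within_open[OF _ assms(1,3)])
      (simp add: legendre_grad[OF assms(2)])
qed

lemma pos_def_matrix_inv_right:
  assumes "pos_def A"
  shows "A *v (matrix_inv A *v v) = v"
proof -
  have "\<forall>v. A *v v = 0 \<longrightarrow> v = 0"
    using assms unfolding pos_def_def by (metis inner_zero_right less_irrefl)
  then have "invertible A"
    by (simp add: matrix_left_invertible_ker invertible_left_inverse)
  then have "A ** matrix_inv A = mat 1"
    unfolding invertible_def matrix_inv_def by (rule someI2_ex) blast
  then show ?thesis by (simp add: matrix_vector_mul_assoc)
qed

theorem mainTheorem4:
  fixes X :: "(real^'n) set"
    and K :: "real^'n \<Rightarrow> real"
    and V :: "real^'n \<Rightarrow> real^'m \<Rightarrow> real"
  assumes X_open: "open X" and X_convex: "convex X" and X_conn: "connected X"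
    and zero_in: "0 \<in> X"
    and K_smooth: "smooth_on K X"
    and K_pd: "\<forall>x\<in>X. pos_def (hess K x)"
    and V_smooth: "smooth_on (\<lambda>p. V (fst p) (snd p)) (X \<times> UNIV)"
    and V_cond: "\<forall>x\<in>X. \<forall>u. x \<bullet> grad (\<lambda>x'. V x' u) x - u \<bullet> grad (\<lambda>u'. V x u') u \<ge> 0"
  shows "bdd_below ((\<lambda>x. legendre K X (grad K x)) ` X) \<and>
         (\<forall>x\<in>X. \<forall>u.
            grad (\<lambda>x'. legendre K X (grad K x')) x \<bullet>
              (- (matrix_inv (hess K x) *v grad (\<lambda>x'. V x' u) x))
            \<le> u \<bullet> (- grad (\<lambda>u'. V x u') u))"
proof -
  have C2: "Ck_on (Suc (Suc 0)) K X" using K_smooth smooth_on_def by blast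
  note K_diff = Ck_on_Suc_Suc_differentiable(1)[OF C2]
  note gradK_diff = Ck_on_Suc_Suc_differentiable(2)[OF C2]
  have pd: "\<And>x. x \<in> X \<Longrightarrow> pos_def (hess K x)" using K_pd by blast
  have inj: "inj_on (grad K) X" by (rule inj_on_grad[OF X_convex gradK_diff pd])
  have "bdd_below ((\<lambda>x. legendre K X (grad K x)) ` X)"
  proof (rule bdd_belowI2)
    fix x assume x: "x \<in> X"
    have "K x + grad K x \<bullet> (0 - x) \<le> K 0"
      by (rule grad_tangent_below[OF X_convex x zero_in K_diff gradK_diff pd])
    then show "- K 0 \<le> legendre K X (grad K x)"
      by (simp add: legendre_grad[OF inj x])
  qed
  moreover have "grad (\<lambda>x'. legendre K X (grad K x')) x \<bullet> (- (matrix_inv (hess K x) *v g))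
      = - (x \<bullet> g)" if "x \<in> X" for x g
    using grad_inner_eq[OF has_derivative_legendre_grad[OF X_open inj that K_diff gradK_diff]]
      pos_def_matrix_inv_right[OF pd] that
    by (simp add: linear_neg[OF matrix_vector_mul_linear])
  ultimately show ?thesis using V_cond by auto
qed

end
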